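(* Let $\Theta$ be a subset of a Polish space with metric $d$, equipped with its Borel $\sigma$-algebra, let $\nu$ be a probability measure on $\Theta$, and let $\{P^\theta:\theta\in\Theta\}$ be probability measures on $(\Omega,\mathcal{F})$ such that $\theta\mapsto P^\theta(A)$ is Borel measurable for each $A\in\mathcal{F}$ and $\theta\mapsto P^\theta$ is continuous in total variation (for every $\theta$ and $\varepsilon>0$ there is $\delta>0$ with $\sup_{A\in\mathcal{F}}|P^\theta(A)-P^{\theta'}(A)|<\varepsilon$ whenever $d(\theta,\theta')<\delta$). Let $\mathbb{P}(A)=\int_\Theta P^\theta(A)\,\nu(\mathrm{d}\theta)$ be the mixture probability measure. Then there exists a Borel set $\Theta^1\subseteq\Theta$ with $\nu(\Theta^1)=1$ such that $P^\theta\ll\mathbb{P}$ for all $\theta\in\Theta^1$. Moreover, letting $c\mathcal{M}^1$ be the set of all countable convex combinations of measures in $\{P^\theta:\theta\in\Theta^1\}$, for every monetary risk measure $\rho$ and every penalty function $\alpha:\mathcal{M}_1\to\mathbb{R}\cup\{+\infty\}$ and all $X\in L^\infty(\mathbb{P})$, $$\sup_{P\in c\mathcal{M}^1}\widehat\rho^P(X)=\widehat\rho^{\mathbb{P}}(X)\quad\text{and}\quad\sup_{P\in c\mathcal{M}^1}\rho^P(X)=\rho^{\mathbb{P}}(X).$$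
   Context: $(\Omega,\mathcal{F})$ is a measurable space, $\mathcal{M}_1$ the set of probability measures on it, $\mathcal{X}$ the space of pointwise bounded $\mathcal{F}$-measurable real functions. A monetary risk measure is $\rho:\mathcal{X}\to\mathbb{R}$ with, pointwise: $X\ge0\Rightarrow\rho(X)\le0$; $X\ge Y\Rightarrow\rho(X)\le\rho(Y)$; $\rho(X+a)=\rho(X)-a$. For $P\in\mathcal{M}_1$ and $X\in L^\infty(P)=L^\infty(\Omega,\mathcal{F},P)$: $\rho^P(X)=\inf\{\rho(\widetilde X):\widetilde X\in\mathcal{X},P(\widetilde X=X)=1\}$, and $\widehat\rho^P(X)=\sup_{Q\in\mathcal{M}_1,Q\ll P}\{\mathbb{E}_Q[-X]-\alpha(Q)\}$. *)

theory Defs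
  imports "HOL-Probability.Probability"
begin

text \<open>The measurable space (Omega, F) is represented by a measure M (only space M and sets M
are used). The space X of pointwise bounded F-measurable real functions.\<close>
definition bdd_meas :: "'a measure \<Rightarrow> ('a \<Rightarrow> real) set" where
  "bdd_meas M = {X. X \<in> borel_measurable M \<and> (\<exists>C. \<forall>\<omega>\<in>space M. \<bar>X \<omega>\<bar> \<le> C)}"

definition prob_measures :: "'a measure \<Rightarrow> 'a measure set" where
  "prob_measures M = {Q. sets Q = sets M \<and> prob_space Q}"

definition monetary_risk_measure :: "'a measure \<Rightarrow> (('a \<Rightarrow> real) \<Rightarrow> real) \<Rightarrow> bool" where
  "monetary_risk_measure M \<rho> \<longleftrightarrow>
     (\<forall>X\<in>bdd_meas M. (\<forall>\<omega>\<in>space M. X \<omega> \<ge> 0) \<longrightarrow> \<rho> X \<le> 0) \<and>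
     (\<forall>X\<in>bdd_meas M. \<forall>Y\<in>bdd_meas M. (\<forall>\<omega>\<in>space M. X \<omega> \<ge> Y \<omega>) \<longrightarrow> \<rho> X \<le> \<rho> Y) \<and>
     (\<forall>X\<in>bdd_meas M. \<forall>a::real. \<rho> (\<lambda>\<omega>. X \<omega> + a) = \<rho> X - a)"

text \<open>Representatives of elements of L-infinity(P): measurable, P-essentially bounded.\<close>
definition Linf :: "'a measure \<Rightarrow> 'a measure \<Rightarrow> ('a \<Rightarrow> real) set" where
  "Linf M P = {X. X \<in> borel_measurable M \<and> (\<exists>C. AE \<omega> in P. \<bar>X \<omega>\<bar> \<le> C)}"

definition rho_P :: "'a measure \<Rightarrow> (('a \<Rightarrow> real) \<Rightarrow> real) \<Rightarrow> 'a measure \<Rightarrow> ('a \<Rightarrow> real) \<Rightarrow> ereal" where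
  "rho_P M \<rho> P X = (INF Y\<in>{Y\<in>bdd_meas M. AE \<omega> in P. Y \<omega> = X \<omega>}. ereal (\<rho> Y))"

definition rho_hat :: "'a measure \<Rightarrow> ('a measure \<Rightarrow> ereal) \<Rightarrow> 'a measure \<Rightarrow> ('a \<Rightarrow> real) \<Rightarrow> ereal" where
  "rho_hat M \<alpha> P X =
     (SUP Q\<in>{Q\<in>prob_measures M. absolutely_continuous P Q}. ereal (\<integral>\<omega>. - X \<omega> \<partial>Q) - \<alpha> Q)"

definition mixture :: "'a measure \<Rightarrow> ('t \<Rightarrow> 'a measure) \<Rightarrow> 't measure \<Rightarrow> 'a measure" where
  "mixture M P \<nu> = measure_of (space M) (sets M) (\<lambda>A. \<integral>\<^sup>+ \<theta>. emeasure (P \<theta>) A \<partial>\<nu>)"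

definition ccomb :: "'a measure \<Rightarrow> ('t \<Rightarrow> 'a measure) \<Rightarrow> 't set \<Rightarrow> 'a measure set" where
  "ccomb M P T = {Q. sets Q = sets M \<and>
     (\<exists>(w::nat \<Rightarrow> real) (th::nat \<Rightarrow> 't). (\<forall>n. w n \<ge> 0) \<and> w sums 1 \<and> (\<forall>n. th n \<in> T) \<and>
        (\<forall>A\<in>sets M. emeasure Q A = (\<Sum>n. ennreal (w n) * emeasure (P (th n)) A)))}"

end

theory Submission
  imports Defs
begin

(* Take for \<Theta>1 the topological support of \<nu>; it has full measure since the parameter space
   is second countable, and every neighbourhood of one of its points has positive \<nu>-measure.
   Continuity in total variation makes {\<theta>. P \<theta> A > 0} open in \<Theta>. Hence for \<theta> in the
   support a P \<theta>-non-null set is non-null for the mixture, so every countable convex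
   combination of the P \<theta>, \<theta> \<in> \<Theta>1, is absolutely continuous w.r.t. the mixture; and the
   combination with positive weights along a dense sequence in \<Theta>1 is equivalent to the
   mixture. Both risk functionals are monotone along absolute continuity, so each supremum is
   attained at that combination, where it equals the value at the mixture. *)

lemma sets_mixture [simp]: "sets (mixture M P \<nu>) = sets M"
  unfolding mixture_def by (simp add: sets_measure_of_conv sets.space_closed sets.sigma_sets_eq)

lemma emeasure_mixture:
  assumes sets_P: "\<And>\<theta>. \<theta> \<in> space \<nu> \<Longrightarrow> sets (P \<theta>) = sets M"
    and measurable_P: "\<And>A. A \<in> sets M \<Longrightarrow> (\<lambda>\<theta>. emeasure (P \<theta>) A) \<in> borel_measurable \<nu>"
    and A: "A \<in> sets M"
  shows "emeasure (mixture M P \<nu>) A = (\<integral>\<^sup>+\<theta>. emeasure (P \<theta>) A \<partial>\<nu>)"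
  unfolding mixture_def
proof (rule emeasure_measure_of_sigma[OF sets.sigma_algebra_axioms _ _ A])
  show "positive (sets M) (\<lambda>A. \<integral>\<^sup>+ \<theta>. emeasure (P \<theta>) A \<partial>\<nu>)"
    by (simp add: positive_def)
  show "countably_additive (sets M) (\<lambda>A. \<integral>\<^sup>+ \<theta>. emeasure (P \<theta>) A \<partial>\<nu>)"
    unfolding countably_additive_def
  proof (intro allI impI)
    fix F :: "nat \<Rightarrow> _"
    assume F: "range F \<subseteq> sets M" "disjoint_family F"
    have "(\<Sum>i. \<integral>\<^sup>+ \<theta>. emeasure (P \<theta>) (F i) \<partial>\<nu>) = \<integral>\<^sup>+ \<theta>. (\<Sum>i. emeasure (P \<theta>) (F i)) \<partial>\<nu>"
      using F measurable_P by (intro nn_integral_suminf[symmetric]) auto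
    also have "\<dots> = \<integral>\<^sup>+ \<theta>. emeasure (P \<theta>) (\<Union>i. F i) \<partial>\<nu>"
      using F sets_P by (intro nn_integral_cong suminf_emeasure) auto
    finally show "(\<Sum>i. \<integral>\<^sup>+ \<theta>. emeasure (P \<theta>) (F i) \<partial>\<nu>) = \<integral>\<^sup>+ \<theta>. emeasure (P \<theta>) (\<Union>(range F)) \<partial>\<nu>" .
  qed
qed

lemma null_sets_mixture_iff:
  assumes "\<And>\<theta>. \<theta> \<in> space \<nu> \<Longrightarrow> sets (P \<theta>) = sets M"
    and "\<And>A. A \<in> sets M \<Longrightarrow> (\<lambda>\<theta>. emeasure (P \<theta>) A) \<in> borel_measurable \<nu>"
  shows "A \<in> null_sets (mixture M P \<nu>) \<longleftrightarrow> A \<in> sets M \<and> (AE \<theta> in \<nu>. emeasure (P \<theta>) A = 0)"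
  using emeasure_mixture[OF assms] nn_integral_0_iff_AE[OF assms(2)] by (auto simp: null_sets_def)

definition measure_support :: "'t::topological_space measure \<Rightarrow> 't set" where
  "measure_support \<nu> = {\<theta> \<in> space \<nu>. \<forall>U. open U \<longrightarrow> \<theta> \<in> U \<longrightarrow> emeasure \<nu> (U \<inter> space \<nu>) \<noteq> 0}"

lemma measure_supportD:
  "\<theta> \<in> measure_support \<nu> \<Longrightarrow> open U \<Longrightarrow> \<theta> \<in> U \<Longrightarrow> emeasure \<nu> (U \<inter> space \<nu>) \<noteq> 0"
  by (simp add: measure_support_def)

lemma open_Int_space_in_sets:
  assumes "sets \<nu> = sets (restrict_space borel (space \<nu>))" "open U"
  shows "U \<inter> space \<nu> \<in> sets \<nu>"
  unfolding assms(1) sets_restrict_space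
  by (rule image_eqI[of _ _ U]) (auto simp: assms(2))

lemma sets_measure_support:
  assumes sets_\<nu>: "sets \<nu> = sets (restrict_space borel (space \<nu>))"
  shows "measure_support \<nu> \<in> sets \<nu>"
proof -
  define N where "N = \<Union>{U. open U \<and> emeasure \<nu> (U \<inter> space \<nu>) = 0}"
  have "measure_support \<nu> = space \<nu> \<inter> - N"
    unfolding measure_support_def N_def by blast
  moreover have "closed (- N)"
    unfolding N_def by auto
  ultimately show ?thesis
    unfolding sets_\<nu> sets_restrict_space by (auto intro: imageI)
qed

lemma AE_in_measure_support:
  fixes \<nu> :: "'t::second_countable_topology measure"
  assumes sets_\<nu>: "sets \<nu> = sets (restrict_space borel (space \<nu>))"
  shows "AE \<theta> in \<nu>. \<theta> \<in> measure_support \<nu>"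
proof -
  obtain B :: "'t set set" where B: "countable B" "topological_basis B"
    using ex_countable_basis by blast
  define N where "N = {b \<in> B. emeasure \<nu> (b \<inter> space \<nu>) = 0}"
  have "(\<Union>b\<in>N. b \<inter> space \<nu>) \<in> null_sets \<nu>"
    using B topological_basis_open[OF B(2)]
    by (intro null_sets_UN') (auto simp: N_def open_Int_space_in_sets[OF sets_\<nu>] intro: countable_subset)
  moreover have "space \<nu> - measure_support \<nu> \<subseteq> (\<Union>b\<in>N. b \<inter> space \<nu>)"
  proof
    fix \<theta> assume "\<theta> \<in> space \<nu> - measure_support \<nu>"
    then obtain U where U: "open U" "\<theta> \<in> U" "emeasure \<nu> (U \<inter> space \<nu>) = 0" "\<theta> \<in> space \<nu>"
      unfolding measure_support_def by blast
    then obtain b where b: "b \<in> B" "\<theta> \<in> b" "b \<subseteq> U"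
      using topological_basisE[OF B(2)] by metis
    have "emeasure \<nu> (b \<inter> space \<nu>) \<le> emeasure \<nu> (U \<inter> space \<nu>)"
      using b U topological_basis_open[OF B(2)]
      by (intro emeasure_mono) (auto simp: open_Int_space_in_sets[OF sets_\<nu>])
    with U b show "\<theta> \<in> (\<Union>b\<in>N. b \<inter> space \<nu>)"
      unfolding N_def by auto
  qed
  ultimately show ?thesis
    unfolding eventually_ae_filter by blast
qed

lemma countable_dense_sequence:
  fixes S :: "'t::second_countable_topology set"
  assumes "S \<noteq> {}"
  obtains x :: "nat \<Rightarrow> 't" where "range x \<subseteq> S" "S \<subseteq> closure (range x)"
proof -
  obtain B :: "'t set set" where B: "countable B" "topological_basis B"
    using ex_countable_basis by blast
  define D where "D = (\<lambda>b. SOME s. s \<in> b \<inter> S) ` {b \<in> B. b \<inter> S \<noteq> {}}"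
  have D_sub: "D \<subseteq> S"
    unfolding D_def by (auto intro: someI2_ex)
  have "countable D"
    unfolding D_def using B(1) by auto
  have "S \<subseteq> closure D"
  proof (intro subsetI closure_iff_nhds_not_empty[THEN iffD2] allI impI)
    fix s V U assume "s \<in> S" "U \<subseteq> V" "open U" "s \<in> U"
    then obtain b where b: "b \<in> B" "s \<in> b" "b \<subseteq> U"
      using topological_basisE[OF B(2)] by metis
    then have "(SOME s. s \<in> b \<inter> S) \<in> D \<inter> U"
      using \<open>s \<in> S\<close> unfolding D_def by (auto intro: someI2_ex)
    with \<open>U \<subseteq> V\<close> show "D \<inter> V \<noteq> {}" by blast
  qed
  moreover have "D \<noteq> {}"
    using \<open>S \<subseteq> closure D\<close> assms by auto
  ultimately show ?thesis
    using that[of "from_nat_into D"] D_sub range_from_nat_into[OF _ \<open>countable D\<close>] by auto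
qed

lemma emeasure_measure_support:
  fixes \<nu> :: "'t::second_countable_topology measure"
  assumes "prob_space \<nu>" "sets \<nu> = sets (restrict_space borel (space \<nu>))"
  shows "emeasure \<nu> (measure_support \<nu>) = 1"
  using prob_space.emeasure_eq_1_AE[OF assms(1) sets_measure_support[OF assms(2)]
      AE_in_measure_support[OF assms(2)]] .

lemma abs_measure_diff_le_SUP:
  assumes "prob_space P1" "prob_space P2" "A \<in> S"
  shows "\<bar>measure P1 A - measure P2 A\<bar> \<le> (SUP B\<in>S. \<bar>measure P1 B - measure P2 B\<bar>)"
proof (rule cSUP_upper[OF assms(3)])
  have "\<bar>measure P1 B - measure P2 B\<bar> \<le> 1" for B
    using prob_space.prob_le_1[OF assms(1), of B] prob_space.prob_le_1[OF assms(2), of B]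
      measure_nonneg[of P1 B] measure_nonneg[of P2 B] by linarith
  then show "bdd_above ((\<lambda>B. \<bar>measure P1 B - measure P2 B\<bar>) ` S)"
    by (intro bdd_aboveI2) auto
qed

lemma ex_ccomb_null_sets_INT:
  fixes P :: "'t \<Rightarrow> 'a measure" and th :: "nat \<Rightarrow> 't"
  assumes th: "range th \<subseteq> T" and prob: "\<And>\<theta>. \<theta> \<in> T \<Longrightarrow> P \<theta> \<in> prob_measures M"
  obtains Q where "Q \<in> ccomb M P T" "null_sets Q = (\<Inter>n. null_sets (P (th n)))"
proof -
  define G where "G = geometric_pmf (1/2 :: real)"
  define Q where "Q = bind (measure_pmf G) (\<lambda>n. P (th n))"
  have sets_P: "sets (P (th n)) = sets M" and prob_P: "prob_space (P (th n))" for n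
    using prob th by (auto simp: prob_measures_def)
  have kernel: "(\<lambda>n. P (th n)) \<in> measurable (measure_pmf G) (subprob_algebra M)"
    using sets_P prob_P by (intro measurable_subprob_algebra) (auto simp: prob_space_imp_subprob_space)
  have sets_Q: "sets Q = sets M"
    unfolding Q_def using sets_P by (intro sets_bind) auto
  have emeasure_Q: "emeasure Q A = (\<Sum>n. ennreal (pmf G n) * emeasure (P (th n)) A)"
    if "A \<in> sets M" for A
    unfolding Q_def
    by (simp add: emeasure_bind[OF _ kernel that] nn_integral_measure_pmf nn_integral_count_space_nat)
  have pmf_G: "pmf G = (\<lambda>n. (1/2) ^ n * (1/2))"
    unfolding G_def by (rule ext) simp
  then have pmf_G_nonzero: "pmf G n \<noteq> 0" for n
    by simp
  have "pmf G sums 1"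
    using sums_mult2[OF geometric_sums[of "1/2 :: real"], of "1/2"] by (simp add: pmf_G)
  then have "Q \<in> ccomb M P T"
    unfolding ccomb_def using sets_Q emeasure_Q th by (auto intro!: exI[of _ "pmf G"] exI[of _ th])
  moreover have "null_sets Q = (\<Inter>n. null_sets (P (th n)))"
  proof (intro set_eqI iffI)
    fix A assume "A \<in> null_sets Q"
    then have "A \<in> sets M"
      using sets_Q by auto
    with \<open>A \<in> null_sets Q\<close> have "(\<Sum>n. ennreal (pmf G n) * emeasure (P (th n)) A) = 0"
      using emeasure_Q by auto
    with pmf_G_nonzero show "A \<in> (\<Inter>n. null_sets (P (th n)))"
      using \<open>A \<in> sets M\<close> sets_P by (auto simp: suminf_eq_zero_iff)
  next
    fix A assume "A \<in> (\<Inter>n. null_sets (P (th n)))"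
    then have "A \<in> sets M" "\<And>n. emeasure (P (th n)) A = 0"
      using sets_P by auto
    then show "A \<in> null_sets Q"
      using sets_Q emeasure_Q by auto
  qed
  ultimately show ?thesis
    by (rule that)
qed

lemma absolutely_continuous_ccomb:
  assumes "Q \<in> ccomb M P T" "sets R = sets M"
    and "\<And>\<theta>. \<theta> \<in> T \<Longrightarrow> absolutely_continuous R (P \<theta>)"
  shows "absolutely_continuous R Q"
proof -
  obtain w th where sets_Q: "sets Q = sets M" and th: "\<And>n. th n \<in> T"
    and emeasure_Q: "\<And>A. A \<in> sets M \<Longrightarrow> emeasure Q A = (\<Sum>n. ennreal (w n) * emeasure (P (th n)) A)"
    using assms(1) unfolding ccomb_def by blast
  show ?thesis
    unfolding absolutely_continuous_def
  proof
    fix A assume "A \<in> null_sets R"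
    then have "A \<in> sets M" "\<And>n. emeasure (P (th n)) A = 0"
      using assms(2,3) th by (auto simp: absolutely_continuous_def)
    then show "A \<in> null_sets Q"
      using sets_Q emeasure_Q by auto
  qed
qed

locale tv_continuous_kernel =
  fixes M :: "'a measure" and \<Theta> :: "'t::{metric_space, second_countable_topology} set"
    and \<nu> :: "'t measure" and P :: "'t \<Rightarrow> 'a measure"
  assumes nu_sets: "sets \<nu> = sets (restrict_space borel \<Theta>)"
    and nu_prob: "prob_space \<nu>"
    and P_prob: "\<forall>\<theta>\<in>\<Theta>. P \<theta> \<in> prob_measures M"
    and P_meas: "\<forall>A\<in>sets M. (\<lambda>\<theta>. measure (P \<theta>) A) \<in> borel_measurable \<nu>"
    and P_tv_cont: "\<forall>\<theta>\<in>\<Theta>. \<forall>\<epsilon>>0. \<exists>\<delta>>0. \<forall>\<theta>'\<in>\<Theta>. dist \<theta> \<theta>' < \<delta> \<longrightarrow>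
         (SUP A\<in>sets M. \<bar>measure (P \<theta>) A - measure (P \<theta>') A\<bar>) < \<epsilon>"
begin

lemma space_nu: "space \<nu> = \<Theta>"
  using sets_eq_imp_space_eq[OF nu_sets] by (simp add: space_restrict_space)

lemma sets_nu: "sets \<nu> = sets (restrict_space borel (space \<nu>))"
  by (simp add: nu_sets space_nu)

lemma sets_P: "\<theta> \<in> \<Theta> \<Longrightarrow> sets (P \<theta>) = sets M"
  and prob_space_P: "\<theta> \<in> \<Theta> \<Longrightarrow> prob_space (P \<theta>)"
  using P_prob by (auto simp: prob_measures_def)

lemma measurable_emeasure_P:
  assumes "A \<in> sets M"
  shows "(\<lambda>\<theta>. emeasure (P \<theta>) A) \<in> borel_measurable \<nu>"
proof (rule measurable_cong[THEN iffD1])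
  show "(\<lambda>\<theta>. ennreal (measure (P \<theta>) A)) \<in> borel_measurable \<nu>"
    using P_meas assms by simp
  show "ennreal (measure (P \<theta>) A) = emeasure (P \<theta>) A" if "\<theta> \<in> space \<nu>" for \<theta>
    using prob_space_P[of \<theta>] that
    by (auto simp: space_nu prob_space_def finite_measure.emeasure_eq_measure)
qed

lemma null_sets_mixture:
  "A \<in> null_sets (mixture M P \<nu>) \<longleftrightarrow> A \<in> sets M \<and> (AE \<theta> in \<nu>. emeasure (P \<theta>) A = 0)"
  by (rule null_sets_mixture_iff) (auto simp: space_nu sets_P measurable_emeasure_P)

lemma emeasure_P_nonzero_nearby:
  assumes \<theta>: "\<theta> \<in> \<Theta>" and A: "A \<in> sets M" and nonzero: "emeasure (P \<theta>) A \<noteq> 0"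
  obtains \<delta> where "\<delta> > 0" "\<And>\<theta>'. \<theta>' \<in> \<Theta> \<Longrightarrow> dist \<theta> \<theta>' < \<delta> \<Longrightarrow> emeasure (P \<theta>') A \<noteq> 0"
proof -
  interpret P\<theta>: prob_space "P \<theta>"
    using prob_space_P[OF \<theta>] .
  have "measure (P \<theta>) A > 0"
    using nonzero P\<theta>.emeasure_eq_measure[of A] by (auto simp: less_le)
  then obtain \<delta> where "\<delta> > 0" and close: "\<forall>\<theta>'\<in>\<Theta>. dist \<theta> \<theta>' < \<delta> \<longrightarrow>
      (SUP B\<in>sets M. \<bar>measure (P \<theta>) B - measure (P \<theta>') B\<bar>) < measure (P \<theta>) A"
    using P_tv_cont \<theta> by blast
  show ?thesis
  proof (rule that[OF \<open>\<delta> > 0\<close>])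
    fix \<theta>' assume \<theta>': "\<theta>' \<in> \<Theta>" "dist \<theta> \<theta>' < \<delta>"
    then have "\<bar>measure (P \<theta>) A - measure (P \<theta>') A\<bar> < measure (P \<theta>) A"
      using abs_measure_diff_le_SUP[OF prob_space_P[OF \<theta>] prob_space_P[OF \<theta>'(1)] A] close
      by fastforce
    then show "emeasure (P \<theta>') A \<noteq> 0"
      by (auto simp: measure_def)
  qed
qed

lemma absolutely_continuous_mixture:
  assumes \<theta>: "\<theta> \<in> measure_support \<nu>"
  shows "absolutely_continuous (mixture M P \<nu>) (P \<theta>)"
  unfolding absolutely_continuous_def
proof
  fix A assume "A \<in> null_sets (mixture M P \<nu>)"
  then have A: "A \<in> sets M" and AE_null: "AE \<theta>' in \<nu>. emeasure (P \<theta>') A = 0"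
    by (auto simp: null_sets_mixture)
  have \<theta>_\<Theta>: "\<theta> \<in> \<Theta>"
    using \<theta> by (simp add: measure_support_def space_nu)
  have "emeasure (P \<theta>) A = 0"
  proof (rule ccontr)
    assume "emeasure (P \<theta>) A \<noteq> 0"
    then obtain \<delta> where "\<delta> > 0"
      and nonzero: "\<And>\<theta>'. \<theta>' \<in> \<Theta> \<Longrightarrow> dist \<theta> \<theta>' < \<delta> \<Longrightarrow> emeasure (P \<theta>') A \<noteq> 0"
      using emeasure_P_nonzero_nearby[OF \<theta>_\<Theta> A] by blast
    from AE_null obtain N where N: "{\<theta>' \<in> \<Theta>. emeasure (P \<theta>') A \<noteq> 0} \<subseteq> N" "N \<in> null_sets \<nu>"
      unfolding eventually_ae_filter space_nu by blast
    have "ball \<theta> \<delta> \<inter> space \<nu> \<in> null_sets \<nu>"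
      using nonzero N
      by (intro null_sets_subset[OF N(2) open_Int_space_in_sets[OF sets_nu]]) (auto simp: space_nu)
    then show False
      using measure_supportD[OF \<theta>, of "ball \<theta> \<delta>"] \<open>\<delta> > 0\<close> by auto
  qed
  then show "A \<in> null_sets (P \<theta>)"
    using A sets_P[OF \<theta>_\<Theta>] by auto
qed

lemma emeasure_P_eq_0_on_closure:
  assumes D: "D \<subseteq> \<Theta>" and \<theta>: "\<theta> \<in> \<Theta>" "\<theta> \<in> closure D" and A: "A \<in> sets M"
    and null: "\<And>d. d \<in> D \<Longrightarrow> emeasure (P d) A = 0"
  shows "emeasure (P \<theta>) A = 0"
proof (rule ccontr)
  assume "emeasure (P \<theta>) A \<noteq> 0"
  then obtain \<delta> where "\<delta> > 0"
    and nonzero: "\<And>\<theta>'. \<theta>' \<in> \<Theta> \<Longrightarrow> dist \<theta> \<theta>' < \<delta> \<Longrightarrow> emeasure (P \<theta>') A \<noteq> 0"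
    using emeasure_P_nonzero_nearby[OF \<theta>(1) A] by blast
  then obtain d where "d \<in> D" "dist \<theta> d < \<delta>"
    using closure_approachableD[OF \<theta>(2)] by blast
  then show False
    using nonzero[of d] null[of d] D by auto
qed

lemma ccomb_absolutely_continuous_mixture:
  "Q \<in> ccomb M P (measure_support \<nu>) \<Longrightarrow> absolutely_continuous (mixture M P \<nu>) Q"
  by (rule absolutely_continuous_ccomb[OF _ sets_mixture absolutely_continuous_mixture])

lemma ex_ccomb_dominating_mixture:
  obtains Q where "Q \<in> ccomb M P (measure_support \<nu>)" "absolutely_continuous Q (mixture M P \<nu>)"
proof -
  have support_\<Theta>: "measure_support \<nu> \<subseteq> \<Theta>"
    by (auto simp: measure_support_def space_nu)
  have "measure_support \<nu> \<noteq> {}"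
    using emeasure_measure_support[OF nu_prob sets_nu] by auto
  then obtain th :: "nat \<Rightarrow> 't"
    where th: "range th \<subseteq> measure_support \<nu>" "measure_support \<nu> \<subseteq> closure (range th)"
    by (rule countable_dense_sequence) blast
  obtain Q where Q: "Q \<in> ccomb M P (measure_support \<nu>)" "null_sets Q = (\<Inter>n. null_sets (P (th n)))"
    using ex_ccomb_null_sets_INT[OF th(1)] P_prob support_\<Theta> by blast
  have "absolutely_continuous Q (mixture M P \<nu>)"
    unfolding absolutely_continuous_def
  proof
    fix A assume "A \<in> null_sets Q"
    then have null_th: "A \<in> null_sets (P (th n))" for n
      using Q(2) by auto
    have th_\<Theta>: "range th \<subseteq> \<Theta>"
      using th(1) support_\<Theta> by blast
    then have A: "A \<in> sets M"
      using null_th[of 0] sets_P by auto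
    have "emeasure (P d) A = 0" if "d \<in> range th" for d
      using that null_th by auto
    then have null_support: "emeasure (P \<theta>) A = 0" if "\<theta> \<in> measure_support \<nu>" for \<theta>
      using emeasure_P_eq_0_on_closure[OF th_\<Theta> _ _ A] that th(2) support_\<Theta> by blast
    have "AE \<theta> in \<nu>. emeasure (P \<theta>) A = 0"
      by (rule eventually_mono[OF AE_in_measure_support[OF sets_nu] null_support])
    then show "A \<in> null_sets (mixture M P \<nu>)"
      using A by (simp add: null_sets_mixture)
  qed
  with Q(1) show ?thesis
    by (rule that)
qed

end

lemma rho_hat_mono:
  assumes "absolutely_continuous R Q"
  shows "rho_hat M \<alpha> Q X \<le> rho_hat M \<alpha> R X"
  unfolding rho_hat_def
  by (rule SUP_subset_mono) (use assms in \<open>auto simp: absolutely_continuous_def\<close>)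

lemma rho_P_mono:
  assumes "sets Q = sets R" "absolutely_continuous R Q"
  shows "rho_P M \<rho> Q X \<le> rho_P M \<rho> R X"
  unfolding rho_P_def
  by (rule INF_superset_mono) (use assms absolutely_continuous_AE in auto)

lemma SUP_rho_hat_eq_dominating:
  assumes "\<And>Q. Q \<in> C \<Longrightarrow> absolutely_continuous R Q" "Q0 \<in> C" "absolutely_continuous Q0 R"
  shows "(SUP Q\<in>C. rho_hat M \<alpha> Q X) = rho_hat M \<alpha> R X"
  by (rule antisym[OF SUP_least SUP_upper2[OF assms(2)]]) (use assms in \<open>auto intro: rho_hat_mono\<close>)

lemma SUP_rho_P_eq_dominating:
  assumes "\<And>Q. Q \<in> C \<Longrightarrow> sets Q = sets R" "\<And>Q. Q \<in> C \<Longrightarrow> absolutely_continuous R Q"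
    and "Q0 \<in> C" "absolutely_continuous Q0 R"
  shows "(SUP Q\<in>C. rho_P M \<rho> Q X) = rho_P M \<rho> R X"
  by (rule antisym[OF SUP_least SUP_upper2[OF assms(3)]]) (use assms in \<open>auto intro: rho_P_mono\<close>)

theorem theorem6p10:
  fixes M :: "'a measure"
    and \<Theta> :: "'t::polish_space set"
    and \<nu> :: "'t measure"
    and P :: "'t \<Rightarrow> 'a measure"
  assumes nu_sets: "sets \<nu> = sets (restrict_space borel \<Theta>)"
    and nu_prob: "prob_space \<nu>"
    and P_prob: "\<forall>\<theta>\<in>\<Theta>. P \<theta> \<in> prob_measures M"
    and P_meas: "\<forall>A\<in>sets M. (\<lambda>\<theta>. measure (P \<theta>) A) \<in> borel_measurable \<nu>"
    and P_tv_cont: "\<forall>\<theta>\<in>\<Theta>. \<forall>\<epsilon>>0. \<exists>\<delta>>0. \<forall>\<theta>'\<in>\<Theta>. dist \<theta> \<theta>' < \<delta> \<longrightarrow>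
         (SUP A\<in>sets M. \<bar>measure (P \<theta>) A - measure (P \<theta>') A\<bar>) < \<epsilon>"
  shows "\<exists>\<Theta>1. \<Theta>1 \<in> sets \<nu> \<and> emeasure \<nu> \<Theta>1 = 1 \<and>
           (\<forall>\<theta>\<in>\<Theta>1. absolutely_continuous (mixture M P \<nu>) (P \<theta>)) \<and>
           (\<forall>\<rho> \<alpha> X. monetary_risk_measure M \<rho> \<longrightarrow>
              (\<forall>Q\<in>prob_measures M. \<alpha> Q \<noteq> -\<infinity>) \<longrightarrow>
              X \<in> Linf M (mixture M P \<nu>) \<longrightarrow>
              (SUP Q\<in>ccomb M P \<Theta>1. rho_hat M \<alpha> Q X) = rho_hat M \<alpha> (mixture M P \<nu>) X \<and>
              (SUP Q\<in>ccomb M P \<Theta>1. rho_P M \<rho> Q X) = rho_P M \<rho> (mixture M P \<nu>) X)"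
proof -
  interpret tv_continuous_kernel M \<Theta> \<nu> P
    by (rule tv_continuous_kernel.intro[OF assms])
  obtain Q0 where Q0: "Q0 \<in> ccomb M P (measure_support \<nu>)" "absolutely_continuous Q0 (mixture M P \<nu>)"
    by (rule ex_ccomb_dominating_mixture)
  show ?thesis
  proof (intro exI[of _ "measure_support \<nu>"] conjI ballI allI impI)
    show "measure_support \<nu> \<in> sets \<nu>"
      by (rule sets_measure_support[OF sets_nu])
    show "emeasure \<nu> (measure_support \<nu>) = 1"
      by (rule emeasure_measure_support[OF nu_prob sets_nu])
    show "absolutely_continuous (mixture M P \<nu>) (P \<theta>)" if "\<theta> \<in> measure_support \<nu>" for \<theta>
      using that by (rule absolutely_continuous_mixture)
    fix \<rho> \<alpha> X
    show "(SUP Q\<in>ccomb M P (measure_support \<nu>). rho_hat M \<alpha> Q X) = rho_hat M \<alpha> (mixture M P \<nu>) X"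
      by (rule SUP_rho_hat_eq_dominating[OF ccomb_absolutely_continuous_mixture Q0])
    show "(SUP Q\<in>ccomb M P (measure_support \<nu>). rho_P M \<rho> Q X) = rho_P M \<rho> (mixture M P \<nu>) X"
      by (rule SUP_rho_P_eq_dominating[OF _ ccomb_absolutely_continuous_mixture Q0])
        (simp add: ccomb_def)
  qed
qed

end
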